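(* Let $\theta>0$, $\nu\in\mathbb{C}$ with $\operatorname{Re}\nu>0$, and $s=\sigma+i\tau\in\mathbb{C}$. Then \[ |\Gamma(s,\theta,\nu)|\le 2^{\sigma}e^{-\operatorname{Re}(\nu)\theta/2}\,\Gamma\Big(\sigma,\frac{\theta}{2},\operatorname{Re}(\nu)\Big). \]
   Context: For $\nu$ with $\operatorname{Re}\nu>0$, $\theta>0$, $s\in\mathbb{C}$: $\Gamma(s,\theta,\nu)=\int_\theta^{+\infty}e^{-\nu y}y^{s-1}\,dy$. *)

theory Defs
  imports "HOL-Analysis.Analysis"
begin

definition inc_gamma :: "complex \<Rightarrow> real \<Rightarrow> complex \<Rightarrow> complex" where
  "inc_gamma s \<theta> \<nu> =
     integral {\<theta>..} (\<lambda>y::real. exp (- \<nu> * complex_of_real y) * complex_of_real y powr (s - 1))"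

end

theory Submission
  imports Defs "HOL-Real_Asymp.Real_Asymp"
begin

text \<open>With \<open>a = Re \<nu>\<close> and \<open>\<sigma> = Re s\<close> the integrand has modulus exp(-a y) y^(\<sigma>-1).
  Split exp(-a y) = exp(-a y/2) exp(-a y/2): on [\<theta>, \<infinity>) the first factor is at most
  exp(-a \<theta>/2), and the substitution y = 2x turns what remains into 2^\<sigma> times the real
  integral over [\<theta>/2, \<infinity>) that defines \<Gamma>(\<sigma>, \<theta>/2, a).\<close>

lemma integrable_on_atLeast_if_exp_decay:
  fixes f :: "real \<Rightarrow> 'a::euclidean_space"
  assumes cont: "continuous_on {c..} f" and "b > 0"
    and decay: "eventually (\<lambda>x. norm (f x) \<le> exp (- b * x)) at_top"
  shows "f integrable_on {c..}"
proof -
  obtain x0 where x0: "\<And>x. x \<ge> x0 \<Longrightarrow> norm (f x) \<le> exp (- b * x)"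
    using decay by (auto simp: eventually_at_top_linorder)
  define x1 where "x1 = max c x0"
  have "continuous_on {c..x1} f" "continuous_on {x1..} f"
    using cont by (auto elim!: continuous_on_subset simp: x1_def)
  then have "f integrable_on {c..x1}"
    by (auto intro: integrable_continuous_interval)
  moreover have "f integrable_on {x1..}"
  proof (rule measurable_bounded_by_integrable_imp_integrable)
    show "f \<in> borel_measurable (lebesgue_on {x1..})"
      using \<open>continuous_on {x1..} f\<close> by (rule continuous_imp_measurable_on_sets_lebesgue) auto
    show "(\<lambda>x. exp (- b * x)) integrable_on {x1..}"
      using \<open>b > 0\<close> by (rule integrable_on_exp_minus_to_infinity)
    show "norm (f x) \<le> exp (- b * x)" if "x \<in> {x1..}" for x
      using that by (intro x0) (simp add: x1_def)
  qed auto
  ultimately show ?thesis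
    by (rule integrable_Un') (auto simp: x1_def)
qed

lemma exp_powr_integrable_on_atLeast:
  fixes a c k :: real
  assumes "a > 0" and "c > 0"
  shows "(\<lambda>x. exp (- a * x) * x powr k) integrable_on {c..}"
proof (rule integrable_on_atLeast_if_exp_decay[where b = "a / 2"])
  show "continuous_on {c..} (\<lambda>x. exp (- a * x) * x powr k)"
    using \<open>c > 0\<close> by (auto intro!: continuous_intros)
  show "eventually (\<lambda>x. norm (exp (- a * x) * x powr k) \<le> exp (- (a / 2) * x)) at_top"
    using \<open>a > 0\<close> by simp real_asymp
qed (use \<open>a > 0\<close> in simp)

lemma has_integral_stretch_atLeast:
  fixes f :: "real \<Rightarrow> real"
  assumes "f absolutely_integrable_on {c..}" and "m > 0"
  shows "((\<lambda>x. f (x / m)) has_integral (m * integral {c..} f)) {m * c..}"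
proof -
  have image: "(\<lambda>x. x / m) ` {m * c..} = {c..}"
  proof (intro equalityI subsetI)
    fix x assume "x \<in> {c..}"
    then show "x \<in> (\<lambda>x. x / m) ` {m * c..}"
      using \<open>m > 0\<close> by (intro image_eqI[where x = "m * x"]) auto
  qed (use \<open>m > 0\<close> in \<open>auto simp: field_simps\<close>)
  have deriv: "((\<lambda>x. x / m) has_field_derivative 1 / m) (at x within {m * c..})" for x
    using \<open>m > 0\<close> by (auto intro!: derivative_eq_intros)
  have "inj_on (\<lambda>x. x / m) {m * c..}"
    using \<open>m > 0\<close> by (auto simp: inj_on_def)
  with has_absolute_integral_change_of_variables_1'[where b = "integral {c..} f", OF _ deriv]
  have "(\<lambda>x. \<bar>1 / m\<bar> * f (x / m)) absolutely_integrable_on {m * c..}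
        \<and> integral {m * c..} (\<lambda>x. \<bar>1 / m\<bar> * f (x / m)) = integral {c..} f"
    using assms(1) by (simp add: image)
  then have "((\<lambda>x. \<bar>1 / m\<bar> * f (x / m)) has_integral integral {c..} f) {m * c..}"
    by (simp add: has_integral_iff absolutely_integrable_on_def)
  from has_integral_mult_right[OF this, of m] show ?thesis
    using \<open>m > 0\<close> by simp
qed

lemma norm_inc_gamma_integrand:
  fixes \<nu> s :: complex and y :: real
  assumes "y > 0"
  shows "norm (exp (- \<nu> * complex_of_real y) * complex_of_real y powr (s - 1))
           = exp (- Re \<nu> * y) * y powr (Re s - 1)"
  using assms by (simp add: norm_mult norm_powr_real_powr)

lemma inc_gamma_integrand_integrable:
  fixes \<theta> :: real and \<nu> s :: complex
  assumes "\<theta> > 0" and "Re \<nu> > 0"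
  shows "(\<lambda>y. exp (- \<nu> * complex_of_real y) * complex_of_real y powr (s - 1)) integrable_on {\<theta>..}"
proof (rule measurable_bounded_by_integrable_imp_integrable)
  show "(\<lambda>y. exp (- \<nu> * complex_of_real y) * complex_of_real y powr (s - 1))
          \<in> borel_measurable (lebesgue_on {\<theta>..})"
    by (rule continuous_imp_measurable_on_sets_lebesgue)
      (use assms in \<open>auto intro!: continuous_intros\<close>)
  show "(\<lambda>y. exp (- Re \<nu> * y) * y powr (Re s - 1)) integrable_on {\<theta>..}"
    using assms by (rule exp_powr_integrable_on_atLeast[rotated])
  show "norm (exp (- \<nu> * complex_of_real y) * complex_of_real y powr (s - 1))
          \<le> exp (- Re \<nu> * y) * y powr (Re s - 1)" if "y \<in> {\<theta>..}" for y
    using that assms by (subst norm_inc_gamma_integrand) auto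
qed auto

lemma inc_gamma_of_real:
  fixes \<sigma> c a :: real
  assumes "c > 0" and "a > 0"
  shows "inc_gamma (complex_of_real \<sigma>) c (complex_of_real a)
           = complex_of_real (integral {c..} (\<lambda>x. exp (- a * x) * x powr (\<sigma> - 1)))"
proof -
  have "inc_gamma (complex_of_real \<sigma>) c (complex_of_real a)
          = integral {c..} (\<lambda>x. complex_of_real (exp (- a * x) * x powr (\<sigma> - 1)))"
    unfolding inc_gamma_def
  proof (rule integral_cong)
    fix x assume "x \<in> {c..}"
    with \<open>c > 0\<close> have "x > 0" by simp
    then show "exp (- complex_of_real a * complex_of_real x) * complex_of_real x powr (complex_of_real \<sigma> - 1)
                 = complex_of_real (exp (- a * x) * x powr (\<sigma> - 1))"
      by (simp add: powr_of_real[symmetric] exp_of_real[symmetric])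
  qed
  also have "\<dots> = complex_of_real (integral {c..} (\<lambda>x. exp (- a * x) * x powr (\<sigma> - 1)))"
    using has_integral_of_real[OF integrable_integral[OF exp_powr_integrable_on_atLeast[OF assms(2,1)]]]
    by (rule integral_unique)
  finally show ?thesis .
qed

lemma exp_powr_le_halved:
  fixes a \<theta> y k :: real
  assumes "a \<ge> 0" and "y > 0" and "\<theta> \<le> y"
  shows "exp (- a * y) * y powr k \<le> 2 powr k * exp (- a * \<theta> / 2) * (exp (- a * (y / 2)) * (y / 2) powr k)"
proof -
  have "exp (- a * y) = exp (- a * (y / 2)) * exp (- a * (y / 2))"
    by (simp add: exp_add[symmetric])
  moreover have "exp (- a * (y / 2)) \<le> exp (- a * \<theta> / 2)"
    using assms by (simp add: mult_left_mono)
  moreover have "y powr k = 2 powr k * (y / 2) powr k"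
    using assms by (simp add: powr_divide)
  ultimately show ?thesis
    by (simp add: mult_right_mono)
qed

theorem lemma4p11:
  fixes \<theta> :: real and \<nu> s :: complex
  assumes "\<theta> > 0" and "Re \<nu> > 0"
  shows "cmod (inc_gamma s \<theta> \<nu>)
           \<le> 2 powr (Re s) * exp (- Re \<nu> * \<theta> / 2)
              * Re (inc_gamma (complex_of_real (Re s)) (\<theta> / 2) (complex_of_real (Re \<nu>)))"
proof -
  define F where "F y = exp (- \<nu> * complex_of_real y) * complex_of_real y powr (s - 1)" for y
  define g where "g x = exp (- Re \<nu> * x) * x powr (Re s - 1)" for x
  define C where "C = 2 powr (Re s - 1) * exp (- Re \<nu> * \<theta> / 2)"
  have "g absolutely_integrable_on {\<theta> / 2..}"
    using exp_powr_integrable_on_atLeast[of "Re \<nu>" "\<theta> / 2" "Re s - 1"] assms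
    by (intro nonnegative_absolutely_integrable_1) (auto simp: g_def[abs_def])
  from has_integral_stretch_atLeast[OF this, of 2]
  have major: "((\<lambda>y. C * g (y / 2)) has_integral C * (2 * integral {\<theta> / 2..} g)) {\<theta>..}"
    by (intro has_integral_mult_right) simp
  have bound: "norm (F y) \<le> C * g (y / 2)" if "y \<in> {\<theta>..}" for y
    using that assms exp_powr_le_halved[of "Re \<nu>" y \<theta> "Re s - 1"] unfolding F_def
    by (subst norm_inc_gamma_integrand) (auto simp: C_def g_def mult.assoc)
  have integrable: "F integrable_on {\<theta>..}"
    unfolding F_def[abs_def] using assms by (rule inc_gamma_integrand_integrable)
  have "cmod (inc_gamma s \<theta> \<nu>) = norm (integral {\<theta>..} F)"
    by (simp add: inc_gamma_def F_def[abs_def])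
  also have "\<dots> \<le> integral {\<theta>..} (\<lambda>y. C * g (y / 2))"
    using integrable major bound by (intro integral_norm_bound_integral) auto
  also have "\<dots> = C * (2 * integral {\<theta> / 2..} g)"
    using major by (rule integral_unique)
  also have "\<dots> = 2 powr (Re s) * exp (- Re \<nu> * \<theta> / 2) * integral {\<theta> / 2..} g"
    by (simp add: C_def powr_diff)
  finally show ?thesis
    using assms by (simp add: inc_gamma_of_real g_def[abs_def])
qed

end
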